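(* Let $\mathcal{X}$ be a countable set and $\pi$ a probability distribution on $\mathcal{X}$. Let $\mathcal{X}_1,\dots,\mathcal{X}_n\subset\mathcal{X}$ with $\bigcup_{i=1}^n\mathcal{X}_i=\mathcal{X}$, and for each $i$ let $Q_i$ be a Markov kernel defined on $\mathcal{X}_i$. Let $S_1,\dots,S_n:\mathcal{X}\to\mathcal{X}$ be $\pi$-invariant involutions, and let $\omega=(\omega_1,\dots,\omega_n):\mathcal{X}\to\Delta^{n-1}$ (the standard simplex $\{y\in\mathbb{R}^n:y_i\ge0,\sum_i y_i=1\}$) satisfy: (C1) $\omega_i(x)>0$ if and only if $x\in\mathcal{X}_i$, for $i=1,\dots,n$; (C2) $\omega_i(x)>0$ and $Q_i(x,x')>0$ if and only if $\omega_i(x')>0$ and $Q_i(S_i(x'),S_i(x))>0$; (C3) $\omega_i(S_i(x))=\omega_i(x)$ for all $x$ and all $i$. Then the Mixed Skew Metropolis–Hastings Markov chain (defined in the context) has $\pi$ as an invariant measure.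
   Context: The Mixed Skew Metropolis–Hastings (MSMH) chain is defined by the following transition from a current state $x$: sample an index $i$ with probability $\omega_i(x)$; sample a proposal $x'\sim Q_i(x,\cdot)$; compute $$r_i(x,x')=\frac{\pi(x')\,\omega_i(S_i(x'))\,Q_i(S_i(x'),S_i(x))}{\pi(x)\,\omega_i(x)\,Q_i(x,x')};$$ sample $u$ uniformly on $[0,1]$; if $u<r_i(x,x')$ the next state is $x'$, otherwise the next state is $S_i(x)$. A $\pi$-invariant involution is a map $S$ with $S\circ S=\mathrm{id}$ and $\pi(S(A))=\pi(A)$ for all $A\subset\mathcal{X}$. *)

theory Defs
  imports "HOL-Probability.Probability"
begin

text \<open>Indices run over {..<n}
  (i.e. 0,...,n-1 instead of 1,...,n). \<omega> i x is the i-th mixing weight at x,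
  Q i x is the proposal distribution of the i-th kernel at x (only relevant
  for x in X_i), S i is the i-th involution.\<close>

definition msmh_ratio ::
  "'a pmf \<Rightarrow> (nat \<Rightarrow> 'a \<Rightarrow> real) \<Rightarrow> (nat \<Rightarrow> 'a \<Rightarrow> 'a pmf) \<Rightarrow> (nat \<Rightarrow> 'a \<Rightarrow> 'a)
     \<Rightarrow> nat \<Rightarrow> 'a \<Rightarrow> 'a \<Rightarrow> real" where
  "msmh_ratio \<pi> \<omega> Q S i x x' =
     (pmf \<pi> x' * \<omega> i (S i x') * pmf (Q i (S i x')) (S i x)) /
     (pmf \<pi> x * \<omega> i x * pmf (Q i x) x')"

definition index_pmf :: "nat \<Rightarrow> (nat \<Rightarrow> 'a \<Rightarrow> real) \<Rightarrow> 'a \<Rightarrow> nat pmf" where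
  "index_pmf n \<omega> x = embed_pmf (\<lambda>i. if i < n then \<omega> i x else 0)"

text \<open>One MSMH transition from x.  Accepting iff u < r with u uniform on [0,1]
  happens with probability min 1 r (r \<ge> 0); bernoulli_pmf clamps to [0,1].\<close>
definition msmh_step ::
  "nat \<Rightarrow> 'a pmf \<Rightarrow> (nat \<Rightarrow> 'a \<Rightarrow> real) \<Rightarrow> (nat \<Rightarrow> 'a \<Rightarrow> 'a pmf) \<Rightarrow> (nat \<Rightarrow> 'a \<Rightarrow> 'a)
     \<Rightarrow> 'a \<Rightarrow> 'a pmf" where
  "msmh_step n \<pi> \<omega> Q S x =
     bind_pmf (index_pmf n \<omega> x) (\<lambda>i.
     bind_pmf (Q i x) (\<lambda>x'.
     bind_pmf (bernoulli_pmf (msmh_ratio \<pi> \<omega> Q S i x x')) (\<lambda>acc.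
     return_pmf (if acc then x' else S i x))))"

definition pi_invariant_involution :: "'a pmf \<Rightarrow> ('a \<Rightarrow> 'a) \<Rightarrow> bool" where
  "pi_invariant_involution \<pi> S \<longleftrightarrow>
     S \<circ> S = id \<and> (\<forall>A. measure_pmf.prob \<pi> (S ` A) = measure_pmf.prob \<pi> A)"

end

theory Submission
  imports Defs
begin

text \<open>For each index i, the component kernel (propose z from Q i x, accept with probability
  min 1 (r i x z), otherwise move to S i x) leaves the weighted measure \<omega> i \<cdot> \<pi> invariant.
  Mass reaches y in two ways: accepted moves x \<rightarrow> y, and rejections at S i y.  The skew balance
  \<pi> x \<omega>_i x Q_i(x,y) \<alpha>(x,y) = \<pi> y \<omega>_i y Q_i(S_i y, S_i x) \<alpha>(S_i y, S_i x), summed over x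
  by means of the bijection S i, makes the first amount \<pi> y \<omega>_i y times the acceptance probability
  at S i y; the second is \<pi> y \<omega>_i y times the rejection probability there.  Summing over i
  gives \<pi> y.\<close>

context
begin

interpretation pmf_as_function .

lemma bernoulli_pmf_clamp: "bernoulli_pmf p = bernoulli_pmf (min 1 (max 0 p))"
  by transfer (auto simp: fun_eq_iff)

end

lemma pmf_bind_bernoulli_if:
  assumes "0 \<le> p"
  shows "pmf (bernoulli_pmf p \<bind> (\<lambda>b. return_pmf (if b then x else z))) y =
         min 1 p * indicator {y} x + (1 - min 1 p) * indicator {y} z"
  using assms by (subst bernoulli_pmf_clamp) (simp add: pmf_bind)

lemma mult_min_1_divide_sym:
  fixes a b :: real
  assumes "0 \<le> a" "0 \<le> b"
  shows "a * min 1 (b / a) = b * min 1 (a / b)"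
proof (cases "a = 0 \<or> b = 0")
  case False
  with assms have "0 < a" "0 < b"
    by auto
  then show ?thesis
    by (cases "a \<le> b") (auto simp: min_def field_simps)
qed auto

lemma
  assumes "\<And>i. i < n \<Longrightarrow> 0 \<le> \<omega> i x" "(\<Sum>i<n. \<omega> i x) = 1"
  shows pmf_index_pmf: "pmf (index_pmf n \<omega> x) i = (if i < n then \<omega> i x else 0)"
    and set_pmf_index_pmf: "set_pmf (index_pmf n \<omega> x) \<subseteq> {..<n}"
proof -
  let ?f = "\<lambda>i. if i < n then \<omega> i x else 0"
  have nonneg: "\<And>i. 0 \<le> ?f i"
    using assms(1) by simp
  have "(\<integral>\<^sup>+i. ennreal (?f i) \<partial>count_space UNIV) = (\<Sum>i<n. ennreal (?f i))"
    by (rule nn_integral_count_space') auto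
  also have "\<dots> = ennreal (\<Sum>i<n. ?f i)"
    by (rule sum_ennreal) (rule nonneg)
  also have "\<dots> = 1"
    using assms(2) by simp
  finally have total: "(\<integral>\<^sup>+i. ennreal (?f i) \<partial>count_space UNIV) = 1" .
  show "pmf (index_pmf n \<omega> x) i = ?f i"
    unfolding index_pmf_def by (rule pmf_embed_pmf[OF nonneg total])
  show "set_pmf (index_pmf n \<omega> x) \<subseteq> {..<n}"
    unfolding index_pmf_def set_embed_pmf[OF nonneg total] by auto
qed

lemma ennreal_pmf_bind_index_pmf:
  assumes "\<And>i. i < n \<Longrightarrow> 0 \<le> \<omega> i x" "(\<Sum>i<n. \<omega> i x) = 1"
  shows "ennreal (pmf (index_pmf n \<omega> x \<bind> f) y) = (\<Sum>i<n. ennreal (\<omega> i x * pmf (f i) y))"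
proof -
  have "ennreal (pmf (index_pmf n \<omega> x \<bind> f) y) =
        (\<Sum>i<n. ennreal (pmf (f i) y) * ennreal (pmf (index_pmf n \<omega> x) i))"
    unfolding ennreal_pmf_bind
    by (rule nn_integral_measure_pmf_support) (use set_pmf_index_pmf[of n \<omega> x, OF assms] in auto)
  then show ?thesis
    using assms by (simp add: pmf_index_pmf ennreal_mult' mult.commute)
qed

definition skew_mh_ratio ::
  "'a pmf \<Rightarrow> ('a \<Rightarrow> real) \<Rightarrow> ('a \<Rightarrow> 'a pmf) \<Rightarrow> ('a \<Rightarrow> 'a) \<Rightarrow> 'a \<Rightarrow> 'a \<Rightarrow> real" where
  "skew_mh_ratio \<pi> w q T x z =
     pmf \<pi> z * w (T z) * pmf (q (T z)) (T x) / (pmf \<pi> x * w x * pmf (q x) z)"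

definition skew_mh_step ::
  "'a pmf \<Rightarrow> ('a \<Rightarrow> real) \<Rightarrow> ('a \<Rightarrow> 'a pmf) \<Rightarrow> ('a \<Rightarrow> 'a) \<Rightarrow> 'a \<Rightarrow> 'a pmf" where
  "skew_mh_step \<pi> w q T x =
     q x \<bind> (\<lambda>z. bernoulli_pmf (skew_mh_ratio \<pi> w q T x z) \<bind>
                (\<lambda>b. return_pmf (if b then z else T x)))"

lemma msmh_step_eq_mixture:
  "msmh_step n \<pi> \<omega> Q S x = index_pmf n \<omega> x \<bind> (\<lambda>i. skew_mh_step \<pi> (\<omega> i) (Q i) (S i) x)"
  by (simp add: msmh_step_def skew_mh_step_def msmh_ratio_def skew_mh_ratio_def)

locale skew_mh =
  fixes \<pi> :: "'a pmf" and w :: "'a \<Rightarrow> real" and T :: "'a \<Rightarrow> 'a" and q :: "'a \<Rightarrow> 'a pmf"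
  assumes T_T [simp]: "T (T x) = x"
    and pmf_T [simp]: "pmf \<pi> (T x) = pmf \<pi> x"
    and w_T [simp]: "w (T x) = w x"
    and w_nonneg: "0 \<le> w x"
begin

definition accept :: "'a \<Rightarrow> 'a \<Rightarrow> real" where
  "accept x z = min 1 (skew_mh_ratio \<pi> w q T x z)"

definition reject :: "'a \<Rightarrow> ennreal" where
  "reject x = (\<integral>\<^sup>+z. ennreal (1 - accept x z) \<partial>q x)"

lemma skew_mh_ratio_nonneg: "0 \<le> skew_mh_ratio \<pi> w q T x z"
  unfolding skew_mh_ratio_def by (simp add: w_nonneg)

lemma accept_nonneg: "0 \<le> accept x z"
  unfolding accept_def by (simp add: skew_mh_ratio_nonneg)

lemma accept_le_1: "accept x z \<le> 1"
  unfolding accept_def by simp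

lemma accept_plus_reject: "(\<integral>\<^sup>+z. ennreal (accept x z) \<partial>q x) + reject x = 1"
proof -
  have "(\<integral>\<^sup>+z. ennreal (accept x z) \<partial>q x) + reject x =
        (\<integral>\<^sup>+z. ennreal (accept x z) + ennreal (1 - accept x z) \<partial>q x)"
    unfolding reject_def by (rule nn_integral_add[symmetric]) auto
  also have "\<dots> = (\<integral>\<^sup>+z. 1 \<partial>q x)"
    by (intro nn_integral_cong) (simp add: accept_nonneg accept_le_1 flip: ennreal_plus)
  finally show ?thesis
    by (simp add: measure_pmf.emeasure_space_1)
qed

lemma ennreal_pmf_skew_mh_step:
  "ennreal (pmf (skew_mh_step \<pi> w q T x) y) =
   ennreal (accept x y * pmf (q x) y) + indicator {T y} x * reject x"
proof -
  have "ennreal (pmf (skew_mh_step \<pi> w q T x) y) =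
        (\<integral>\<^sup>+z. ennreal (accept x z) * indicator {y} z +
               indicator {T y} x * ennreal (1 - accept x z) \<partial>q x)"
    unfolding skew_mh_step_def
  proof (subst ennreal_pmf_bind, intro nn_integral_cong)
    fix z
    have "x = T y \<longleftrightarrow> T x = y"
      by auto
    then show "ennreal (pmf (bernoulli_pmf (skew_mh_ratio \<pi> w q T x z) \<bind>
                 (\<lambda>b. return_pmf (if b then z else T x))) y) =
               ennreal (accept x z) * indicator {y} z + indicator {T y} x * ennreal (1 - accept x z)"
      by (auto simp: pmf_bind_bernoulli_if skew_mh_ratio_nonneg accept_def split: split_indicator
               simp flip: ennreal_plus)
  qed
  also have "\<dots> = (\<integral>\<^sup>+z. ennreal (accept x z) * indicator {y} z \<partial>q x) +
                   (\<integral>\<^sup>+z. indicator {T y} x * ennreal (1 - accept x z) \<partial>q x)"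
    by (rule nn_integral_add) auto
  finally show ?thesis
    by (simp add: reject_def nn_integral_cmult emeasure_pmf_single accept_nonneg ennreal_mult')
qed

lemma accepted_flux_skew_sym:
  "pmf \<pi> x * w x * (accept x y * pmf (q x) y) =
   pmf \<pi> y * w y * (accept (T y) (T x) * pmf (q (T y)) (T x))"
proof -
  define a where "a = pmf \<pi> x * w x * pmf (q x) y"
  define b where "b = pmf \<pi> y * w y * pmf (q (T y)) (T x)"
  have "0 \<le> a" "0 \<le> b"
    unfolding a_def b_def by (simp_all add: w_nonneg)
  moreover have "accept x y = min 1 (b / a)" "accept (T y) (T x) = min 1 (a / b)"
    unfolding accept_def skew_mh_ratio_def a_def b_def by simp_all
  ultimately show ?thesis
    using mult_min_1_divide_sym[of a b] unfolding a_def b_def by (simp add: ac_simps)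
qed

lemma nn_integral_accepted_flux:
  "(\<integral>\<^sup>+x. ennreal (pmf \<pi> x * w x * (accept x y * pmf (q x) y)) \<partial>count_space UNIV) =
   ennreal (pmf \<pi> y * w y) * (\<integral>\<^sup>+z. ennreal (accept (T y) z) \<partial>q (T y))"
proof -
  have "bij T"
    by (metis T_T bij_betw_byWitness top_greatest top_le)
  have "(\<integral>\<^sup>+x. ennreal (pmf \<pi> x * w x * (accept x y * pmf (q x) y)) \<partial>count_space UNIV) =
        (\<integral>\<^sup>+x. ennreal (pmf \<pi> y * w y * (accept (T y) (T x) * pmf (q (T y)) (T x)))
           \<partial>count_space UNIV)"
    by (simp only: accepted_flux_skew_sym)
  also have "\<dots> = (\<integral>\<^sup>+z. ennreal (pmf \<pi> y * w y * (accept (T y) z * pmf (q (T y)) z))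
                     \<partial>count_space UNIV)"
    by (rule nn_integral_bij_count_space[OF \<open>bij T\<close>])
  also have "\<dots> = (\<integral>\<^sup>+z. ennreal (pmf \<pi> y * w y) *
                     (ennreal (pmf (q (T y)) z) * ennreal (accept (T y) z)) \<partial>count_space UNIV)"
    by (intro nn_integral_cong) (simp add: w_nonneg accept_nonneg ennreal_mult mult_ac)
  finally show ?thesis
    by (simp add: nn_integral_measure_pmf nn_integral_cmult)
qed

lemma weighted_balance:
  "(\<integral>\<^sup>+x. ennreal (w x * pmf (skew_mh_step \<pi> w q T x) y) \<partial>\<pi>) = ennreal (pmf \<pi> y * w y)"
proof -
  have "(\<integral>\<^sup>+x. ennreal (w x * pmf (skew_mh_step \<pi> w q T x) y) \<partial>\<pi>) =
        (\<integral>\<^sup>+x. ennreal (pmf \<pi> x * w x * (accept x y * pmf (q x) y)) +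
               (ennreal (pmf \<pi> x * w x) * reject x) * indicator {T y} x \<partial>count_space UNIV)"
    unfolding nn_integral_measure_pmf
  proof (intro nn_integral_cong)
    fix x
    have "ennreal (pmf \<pi> x) * ennreal (w x * pmf (skew_mh_step \<pi> w q T x) y) =
          ennreal (pmf \<pi> x * w x) * ennreal (pmf (skew_mh_step \<pi> w q T x) y)"
      by (simp add: w_nonneg ennreal_mult mult.assoc)
    then show "ennreal (pmf \<pi> x) * ennreal (w x * pmf (skew_mh_step \<pi> w q T x) y) =
          ennreal (pmf \<pi> x * w x * (accept x y * pmf (q x) y)) +
          (ennreal (pmf \<pi> x * w x) * reject x) * indicator {T y} x"
      by (simp add: ennreal_pmf_skew_mh_step distrib_left w_nonneg accept_nonneg ennreal_mult mult_ac)
  qed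
  also have "\<dots> = ennreal (pmf \<pi> y * w y) * (\<integral>\<^sup>+z. ennreal (accept (T y) z) \<partial>q (T y)) +
                   ennreal (pmf \<pi> y * w y) * reject (T y)"
    by (subst nn_integral_add) (simp_all add: nn_integral_accepted_flux)
  also have "\<dots> = ennreal (pmf \<pi> y * w y)"
    by (simp add: accept_plus_reject flip: distrib_left)
  finally show ?thesis .
qed

end

lemma pi_invariant_involutionD:
  assumes "pi_invariant_involution \<pi> T"
  shows "T (T x) = x" and "pmf \<pi> (T x) = pmf \<pi> x"
proof -
  show "T (T x) = x"
    using assms unfolding pi_invariant_involution_def by (metis comp_apply id_apply)
  show "pmf \<pi> (T x) = pmf \<pi> x"
    using assms unfolding pi_invariant_involution_def
    by (metis image_empty image_insert measure_pmf_single)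
qed

theorem theorem4p2:
  fixes \<pi> :: "'a::countable pmf"
    and n :: nat
    and Xs :: "nat \<Rightarrow> 'a set"
    and Q :: "nat \<Rightarrow> 'a \<Rightarrow> 'a pmf"
    and S :: "nat \<Rightarrow> 'a \<Rightarrow> 'a"
    and \<omega> :: "nat \<Rightarrow> 'a \<Rightarrow> real"
  assumes cover: "(\<Union>i<n. Xs i) = UNIV"
    and invol: "\<And>i. i < n \<Longrightarrow> pi_invariant_involution \<pi> (S i)"
    and simplex_nonneg: "\<And>i x. i < n \<Longrightarrow> \<omega> i x \<ge> 0"
    and simplex_sum: "\<And>x. (\<Sum>i<n. \<omega> i x) = 1"
    and C1: "\<And>i x. i < n \<Longrightarrow> (\<omega> i x > 0 \<longleftrightarrow> x \<in> Xs i)"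
    and C2: "\<And>i x x'. i < n \<Longrightarrow>
               (\<omega> i x > 0 \<and> pmf (Q i x) x' > 0) \<longleftrightarrow>
               (\<omega> i x' > 0 \<and> pmf (Q i (S i x')) (S i x) > 0)"
    and C3: "\<And>i x. i < n \<Longrightarrow> \<omega> i (S i x) = \<omega> i x"
  shows "bind_pmf \<pi> (msmh_step n \<pi> \<omega> Q S) = \<pi>"
proof (rule pmf_eqI)
  fix y
  have skew_mh: "skew_mh \<pi> (\<omega> i) (S i)" if "i < n" for i
    using pi_invariant_involutionD[OF invol[OF that]] C3[OF that] simplex_nonneg[OF that]
    by unfold_locales auto
  have "ennreal (pmf (\<pi> \<bind> msmh_step n \<pi> \<omega> Q S) y) =
        (\<integral>\<^sup>+x. (\<Sum>i<n. ennreal (\<omega> i x * pmf (skew_mh_step \<pi> (\<omega> i) (Q i) (S i) x) y)) \<partial>\<pi>)"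
    unfolding ennreal_pmf_bind[of \<pi>] msmh_step_eq_mixture
    by (simp add: ennreal_pmf_bind_index_pmf simplex_nonneg simplex_sum)
  also have "\<dots> = (\<Sum>i<n. \<integral>\<^sup>+x. ennreal (\<omega> i x * pmf (skew_mh_step \<pi> (\<omega> i) (Q i) (S i) x) y) \<partial>\<pi>)"
    by (rule nn_integral_sum) auto
  also have "\<dots> = (\<Sum>i<n. ennreal (pmf \<pi> y * \<omega> i y))"
    using skew_mh.weighted_balance[OF skew_mh] by simp
  also have "\<dots> = ennreal (pmf \<pi> y)"
    by (subst sum_ennreal) (simp_all add: simplex_nonneg simplex_sum flip: sum_distrib_left)
  finally show "pmf (\<pi> \<bind> msmh_step n \<pi> \<omega> Q S) y = pmf \<pi> y"
    by simp
qed

end
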